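(* Let $S=\mathbb{Z}^2\setminus 2\mathbb{Z}^2$ (the decorated lattice) with its set $L$ of nearest-neighbour edges (pairs $\{i,j\}\subset S$ with $\|i-j\|_2=1$). Consider the $XY$ model on $S$ with spins $\sigma_i\in\mathbb{S}^1$ (angles $\theta_i$) and formal Hamiltonian $$H(\sigma)=-\sum_{\{i,j\}\in L}J\langle\sigma_i,\sigma_j\rangle-\sum_{i\in S}h_i\langle\sigma_i,e_2\rangle=-\sum_{\{i,j\}\in L}J\cos(\theta_i-\theta_j)-\sum_{i\in S}h_i\sin\theta_i,$$ with $J>0$, where the field is $h_i=\sum_{j\in 2\mathbb{Z}^2,\ \|i-j\|_2=1} s_{j/2}$ and, for $(a,b)\in\mathbb{Z}^2$, $s_{(a,b)}=(-1)^{\lfloor a/2\rfloor+\lfloor b/2\rfloor}$ (so $h_i\in\{2,0,-2\}$: $+2$ between two North-prescribed even sites, $-2$ between two South-prescribed ones, $0$ otherwise). Then this model displays a spin-flop transition at zero temperature in the East–West direction: there exist two distinct ground states $\theta^{ME}$ and $\theta^{MW}$ whose horizontal spin components are opposite and nonzero, $\sigma^{(1)}(\theta^{ME})=-\sigma^{(1)}(\theta^{MW})\neq 0$.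
   Context: $e_1,e_2$ is the canonical basis of $\mathbb{R}^2$; $\sigma^{(1)}=\langle\sigma,e_1\rangle=\cos\theta$ is the horizontal (East–West) component of a spin. The field $h$ comes from freezing the spins at sites $2k$, $k\in\mathbb{Z}^2$, to North ($s_k=+1$) or South ($s_k=-1$) according to the doubly alternating pattern. A ground state is a configuration on $S$ of minimal energy (no finite modification lowers the energy). $\theta^{ME}$ ("mostly East") is periodic, taking values NE, E, SE; $\theta^{MW}$ ("mostly West") is its mirror image NW, W, SW under $\theta\mapsto\pi-\theta$. *)

theory Defs
  imports Complex_Main
begin

type_synonym site = "int \<times> int"

definition dlat :: "site set" where
  "dlat = UNIV - {p. even (fst p) \<and> even (snd p)}"

definition nn :: "site \<Rightarrow> site \<Rightarrow> bool" where
  "nn i j \<longleftrightarrow> (fst i - fst j)^2 + (snd i - snd j)^2 = 1"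

definition s_pat :: "site \<Rightarrow> real" where
  "s_pat p = (-1::real) powi (\<lfloor>real_of_int (fst p) / 2\<rfloor> + \<lfloor>real_of_int (snd p) / 2\<rfloor>)"

definition field :: "site \<Rightarrow> real" where
  "field i = (\<Sum>j\<in>{j. even (fst j) \<and> even (snd j) \<and> nn i j}.
                 s_pat (fst j div 2, snd j div 2))"

text \<open>Unordered edges are summed as ordered pairs
  with a factor 1/2 (cos is even).\<close>
definition H_loc :: "real \<Rightarrow> site set \<Rightarrow> (site \<Rightarrow> real) \<Rightarrow> real" where
  "H_loc J Lam \<theta> =
     - (1/2) * (\<Sum>(i,j)\<in>{(i,j). i \<in> dlat \<and> j \<in> dlat \<and> nn i j \<and> (i \<in> Lam \<or> j \<in> Lam)}.
                   J * cos (\<theta> i - \<theta> j))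
     - (\<Sum>i\<in>Lam. field i * sin (\<theta> i))"

definition ground_state :: "real \<Rightarrow> (site \<Rightarrow> real) \<Rightarrow> bool" where
  "ground_state J \<theta> \<longleftrightarrow>
     (\<forall>Lam \<theta>'. finite Lam \<longrightarrow> Lam \<subseteq> dlat \<longrightarrow> (\<forall>i\<in>dlat - Lam. \<theta>' i = \<theta> i) \<longrightarrow>
        H_loc J Lam \<theta> \<le> H_loc J Lam \<theta>')"

end

(*
  Every bond of the decorated lattice joins a midpoint m (fst m + snd m odd) to a center (both
  coordinates odd), so the energy splits into midpoint energies
    E_m = - J * (sum of cos (theta m - theta j) over the two neighbours j of m) - h m sin (theta m).
  An uncharged midpoint (h m = 0) has E_m >= -2J.  A charged midpoint (h m = 2e, e = 1 or -1) lies
  between a full center c and another center u, and with R = sqrt (J^2 + 4) the identity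
    2R (R - J cos (x - z) - 2 sin x + (2J/R) sin z)
      = (R cos x - J cos z)^2 + (R sin x - J sin z - 2)^2
  gives E_m + (J/R) h m sin (theta u) >= -J - R, with equality when theta m = theta c = e beta and
  theta u = 0, where tan beta = 2/J.  The correction terms (J/R) h m sin (theta u) cancel in the sum
  because the field adds up to zero around every center that is not full.  So the configuration
  equal to e beta on full centers and charged midpoints and to 0 elsewhere minimises every
  corrected midpoint energy at once and is a ground state; its mirror image under
  theta -> pi - theta is a second one, with opposite horizontal components.
*)

theory Submission
  imports Defs "HOL-Library.Groups_Big_Fun"
begin

section \<open>Geometry of the decorated lattice\<close>

definition midpoint :: "site \<Rightarrow> bool" where
  "midpoint p \<longleftrightarrow> odd (fst p + snd p)"

definition center :: "site \<Rightarrow> bool" where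
  "center p \<longleftrightarrow> odd (fst p) \<and> odd (snd p)"

definition nbrs :: "site \<Rightarrow> site set" where
  "nbrs i = {j. i \<in> dlat \<and> j \<in> dlat \<and> nn i j}"

lemma int_sum_squares_eq_1:
  "(x::int)^2 + y^2 = 1 \<longleftrightarrow> (x, y) \<in> {(1, 0), (-1, 0), (0, 1), (0, -1)}"
proof
  assume h: "x^2 + y^2 = 1"
  then have "\<bar>x\<bar> \<le> 1" "\<bar>y\<bar> \<le> 1"
    using abs_le_square_iff[of x 1] abs_le_square_iff[of y 1]
    by (simp_all add: power2_eq_square) (smt (verit) zero_le_square)+
  then have "x \<in> {-1, 0, 1}" "y \<in> {-1, 0, 1}" by auto
  then show "(x, y) \<in> {(1, 0), (-1, 0), (0, 1), (0, -1)}" using h by auto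
qed auto

lemma nn_iff:
  "nn (a, b) j \<longleftrightarrow> j \<in> {(a - 1, b), (a + 1, b), (a, b - 1), (a, b + 1)}"
  by (cases j) (auto simp: nn_def int_sum_squares_eq_1 algebra_simps)

lemma nn_sym: "nn i j \<longleftrightarrow> nn j i"
  unfolding nn_def by (simp add: power2_commute)

lemma nbrs_sym: "j \<in> nbrs i \<longleftrightarrow> i \<in> nbrs j"
  unfolding nbrs_def using nn_sym by blast

lemma dlat_iff: "p \<in> dlat \<longleftrightarrow> midpoint p \<or> center p"
  unfolding dlat_def midpoint_def center_def by auto

lemma midpoint_in_dlat: "midpoint p \<Longrightarrow> p \<in> dlat"
  by (simp add: dlat_iff)

lemma center_not_midpoint: "center p \<Longrightarrow> \<not> midpoint p"
  unfolding center_def midpoint_def by presburger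

lemma nbrs_midpoint_iff: "j \<in> nbrs i \<Longrightarrow> midpoint j \<longleftrightarrow> \<not> midpoint i"
  by (cases i) (auto simp: nbrs_def nn_iff midpoint_def)

lemma nbrs_of_midpoint_center: "j \<in> nbrs i \<Longrightarrow> midpoint i \<Longrightarrow> center j"
  using nbrs_midpoint_iff[of j i] dlat_iff[of j] by (auto simp: nbrs_def)

lemma nbrs_even_odd: "even a \<Longrightarrow> odd b \<Longrightarrow> nbrs (a, b) = {(a - 1, b), (a + 1, b)}"
  by (auto simp: nbrs_def nn_iff dlat_def)

lemma nbrs_odd_even: "odd a \<Longrightarrow> even b \<Longrightarrow> nbrs (a, b) = {(a, b - 1), (a, b + 1)}"
  by (auto simp: nbrs_def nn_iff dlat_def)

lemma nbrs_center:
  "odd a \<Longrightarrow> odd b \<Longrightarrow> nbrs (a, b) = {(a - 1, b), (a + 1, b), (a, b - 1), (a, b + 1)}"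
  by (auto simp: nbrs_def nn_iff dlat_def)

lemma finite_nbrs: "finite (nbrs i)"
proof -
  obtain a b where i: "i = (a, b)" by fastforce
  have "nbrs i \<subseteq> {(a - 1, b), (a + 1, b), (a, b - 1), (a, b + 1)}"
    by (auto simp: nbrs_def nn_iff i)
  then show ?thesis by (rule finite_subset) simp
qed

section \<open>The field\<close>

(* Centers of the plaquettes whose four frozen corner spins have the same prescription. *)
definition full :: "site \<Rightarrow> bool" where
  "full p \<longleftrightarrow> fst p mod 4 = 1 \<and> snd p mod 4 = 1"

definition charged :: "site \<Rightarrow> bool" where
  "charged p \<longleftrightarrow> (even (fst p) \<and> snd p mod 4 = 1) \<or> (fst p mod 4 = 1 \<and> even (snd p))"

definition block_sign :: "site \<Rightarrow> real" where
  "block_sign p = (if even (fst p div 4 + snd p div 4) then 1 else -1)"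

lemma s_pat_eq: "s_pat (p, q) = (if even (p div 2 + q div 2) then 1 else -1)"
proof -
  have "\<lfloor>real_of_int p / 2\<rfloor> = p div 2" "\<lfloor>real_of_int q / 2\<rfloor> = q div 2"
    using floor_divide_of_int_eq[of p 2] floor_divide_of_int_eq[of q 2] by simp_all
  then show ?thesis by (simp add: s_pat_def power_int_minus_left)
qed

lemma div2_div2: "(x::int) div 2 div 2 = x div 4"
  by (simp add: zdiv_zmult2_eq)

lemma field_even_odd:
  assumes "even a" "odd b"
  shows "field (a, b) = (if b mod 4 = 1 then 2 * block_sign (a, b) else 0)"
proof -
  have "{j. even (fst j) \<and> even (snd j) \<and> nn (a, b) j} = {(a, b - 1), (a, b + 1)}"
    using assms by (auto simp: nn_iff)
  then have f: "field (a, b) = s_pat (a div 2, (b - 1) div 2) + s_pat (a div 2, (b + 1) div 2)"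
    by (simp add: field_def)
  show ?thesis
  proof (cases "b mod 4 = 1")
    case True
    then have "(b - 1) div 4 = b div 4" "(b + 1) div 4 = b div 4" by presburger+
    then show ?thesis using f True by (simp add: s_pat_eq block_sign_def div2_div2)
  next
    case False
    then have "(b + 1) div 4 = (b - 1) div 4 + 1" using assms by presburger
    then show ?thesis using f False by (simp add: s_pat_eq div2_div2)
  qed
qed

lemma field_swap: "field (b, a) = field (a, b)"
proof -
  let ?E = "\<lambda>i. {j. even (fst j) \<and> even (snd j) \<and> nn i j}"
  have "?E (b, a) = prod.swap ` ?E (a, b)"
    by (auto simp: nn_iff image_iff)
  then show ?thesis
    by (simp add: field_def sum.reindex s_pat_def add.commute)
qed

lemma field_odd_even:
  assumes "odd a" "even b"
  shows "field (a, b) = (if a mod 4 = 1 then 2 * block_sign (a, b) else 0)"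
  using field_even_odd[OF assms(2,1)] by (simp add: field_swap block_sign_def add.commute)

lemma field_eq: "field p = (if charged p then 2 * block_sign p else 0)"
proof -
  obtain a b where p: "p = (a, b)" by fastforce
  consider "even a = even b" | "even a" "odd b" | "odd a" "even b" by blast
  then show ?thesis
  proof cases
    case 1
    then have E: "{j. even (fst j) \<and> even (snd j) \<and> nn p j} = {}"
      by (auto simp: nn_iff p)
    have "\<not> charged p"
      using 1 by (auto simp: charged_def p) presburger+
    then show ?thesis unfolding field_def E by simp
  qed (auto simp: field_even_odd field_odd_even charged_def p)
qed

lemma full_center: "full p \<Longrightarrow> center p"
  unfolding full_def center_def by presburger

lemma charged_midpoint: "charged p \<Longrightarrow> midpoint p"
  unfolding charged_def midpoint_def by presburger

lemma center_not_charged: "center p \<Longrightarrow> \<not> charged p"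
  unfolding charged_def center_def by presburger

lemma field_center: "center p \<Longrightarrow> field p = 0"
  by (simp add: field_eq center_not_charged)

lemma even_mod_4: "even (x::int) \<longleftrightarrow> x mod 4 = 0 \<or> x mod 4 = 2"
  by presburger

lemma charged_of_full_nbr:
  assumes "j \<in> nbrs m" "full j"
  shows "charged m"
proof -
  obtain a b where j: "j = (a, b)" by fastforce
  have "a mod 4 = 1" "b mod 4 = 1" using assms(2) by (simp_all add: full_def j)
  moreover have "odd a" "odd b" using calculation by presburger+
  moreover have "m \<in> nbrs (a, b)" using assms(1) nbrs_sym j by blast
  ultimately have "m \<in> {(a - 1, b), (a + 1, b), (a, b - 1), (a, b + 1)}"
    by (simp add: nbrs_center)
  with \<open>a mod 4 = 1\<close> \<open>b mod 4 = 1\<close> show ?thesis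
    by (auto simp: charged_def) presburger+
qed

lemma charged_nbrs:
  assumes "charged m"
  obtains c u where "nbrs m = {c, u}" "full c" "center u" "\<not> full u" "block_sign c = block_sign m"
proof -
  obtain a b where m: "m = (a, b)" by fastforce
  consider "even a" "b mod 4 = 1" "a mod 4 = 0" | "even a" "b mod 4 = 1" "a mod 4 = 2"
    | "even b" "a mod 4 = 1" "b mod 4 = 0" | "even b" "a mod 4 = 1" "b mod 4 = 2"
    using assms unfolding charged_def m even_mod_4 by auto
  then show ?thesis
  proof cases
    case 1
    moreover have "(a + 1) div 4 = a div 4" "(a - 1) mod 4 = 3" "(a + 1) mod 4 = 1" "odd b"
      using 1 by presburger+
    ultimately show ?thesis
      by (intro that[of "(a + 1, b)" "(a - 1, b)"])
         (auto simp: m nbrs_even_odd full_def center_def block_sign_def)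
  next
    case 2
    moreover have "(a - 1) div 4 = a div 4" "(a + 1) mod 4 = 3" "(a - 1) mod 4 = 1" "odd b"
      using 2 by presburger+
    ultimately show ?thesis
      by (intro that[of "(a - 1, b)" "(a + 1, b)"])
         (auto simp: m nbrs_even_odd full_def center_def block_sign_def)
  next
    case 3
    moreover have "(b + 1) div 4 = b div 4" "(b - 1) mod 4 = 3" "(b + 1) mod 4 = 1" "odd a"
      using 3 by presburger+
    ultimately show ?thesis
      by (intro that[of "(a, b + 1)" "(a, b - 1)"])
         (auto simp: m nbrs_odd_even full_def center_def block_sign_def)
  next
    case 4
    moreover have "(b - 1) div 4 = b div 4" "(b + 1) mod 4 = 3" "(b - 1) mod 4 = 1" "odd a"
      using 4 by presburger+
    ultimately show ?thesis
      by (intro that[of "(a, b - 1)" "(a, b + 1)"])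
         (auto simp: m nbrs_odd_even full_def center_def block_sign_def)
  qed
qed

lemma field_sum_nbrs_eq_0:
  assumes "\<not> full u"
  shows "(\<Sum>m\<in>nbrs u. field m) = 0"
proof -
  obtain a b where u: "u = (a, b)" by fastforce
  consider "u \<notin> dlat" | "midpoint u" | "center u" using dlat_iff by blast
  then show ?thesis
  proof cases
    case 1
    then show ?thesis by (simp add: nbrs_def)
  next
    case 2
    then show ?thesis by (simp add: field_center nbrs_of_midpoint_center)
  next
    case 3
    then have ab: "odd a" "odd b" "a mod 4 = 3 \<or> b mod 4 = 3"
      using assms unfolding u center_def full_def by simp_all presburger
    have "field (a - 1, b) + field (a + 1, b) = 0"
    proof (cases "b mod 4 = 1")
      case True
      then have "(a + 1) div 4 = (a - 1) div 4 + 1" using ab by presburger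
      then show ?thesis using ab by (simp add: field_even_odd block_sign_def)
    qed (use ab in \<open>simp add: field_even_odd\<close>)
    moreover have "field (a, b - 1) + field (a, b + 1) = 0"
    proof (cases "a mod 4 = 1")
      case True
      then have "(b + 1) div 4 = (b - 1) div 4 + 1" using ab by presburger
      then show ?thesis using ab by (simp add: field_odd_even block_sign_def)
    qed (use ab in \<open>simp add: field_odd_even\<close>)
    ultimately show ?thesis using ab by (simp add: u nbrs_center)
  qed
qed

section \<open>Finitely supported sums over bonds\<close>

lemma Sum_any_uminus: "Sum_any (\<lambda>x. - f x) = - Sum_any (f :: _ \<Rightarrow> 'b :: ab_group_add)"
  by (simp add: Sum_any.expand_set sum_negf)

lemma Sum_any_nonneg: "(\<And>x. 0 \<le> f x) \<Longrightarrow> 0 \<le> Sum_any (f :: _ \<Rightarrow> 'b :: ordered_comm_monoid_add)"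
  by (simp add: Sum_any.expand_set sum_nonneg)

lemma Sum_any_nbrs: "(\<Sum>j\<in>nbrs i. f j) = Sum_any (\<lambda>j. if j \<in> nbrs i then f j else 0)"
  by (rule Sum_any.conditionalize[OF finite_nbrs])

lemma finite_bonds_touching: "finite \<Lambda> \<Longrightarrow> finite {(i, j). j \<in> nbrs i \<and> (i \<in> \<Lambda> \<or> j \<in> \<Lambda>)}"
proof -
  assume fin: "finite \<Lambda>"
  have "{(i, j). j \<in> nbrs i \<and> (i \<in> \<Lambda> \<or> j \<in> \<Lambda>)} \<subseteq> Sigma \<Lambda> nbrs \<union> prod.swap ` Sigma \<Lambda> nbrs"
    by (auto simp: image_iff nbrs_sym[of _ "_ :: site"])
  moreover have "finite (Sigma \<Lambda> nbrs)" by (intro finite_SigmaI fin finite_nbrs)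
  ultimately show ?thesis by (meson finite_UnI finite_imageI finite_subset)
qed

lemma finite_support_near:
  assumes fin: "finite \<Lambda>" and near: "\<And>m. f m \<noteq> 0 \<Longrightarrow> m \<in> \<Lambda> \<or> (\<exists>j\<in>nbrs m. j \<in> \<Lambda>)"
  shows "finite {m. f m \<noteq> 0}"
proof (rule finite_subset)
  show "{m. f m \<noteq> 0} \<subseteq> \<Lambda> \<union> \<Union> (nbrs ` \<Lambda>)"
    using near nbrs_sym by blast
  show "finite (\<Lambda> \<union> \<Union> (nbrs ` \<Lambda>))" using fin finite_nbrs by blast
qed

lemma finite_support_sum_nbrs:
  assumes "finite {(i, j). j \<in> nbrs i \<and> F i j \<noteq> 0}"
  shows "finite {i. (\<Sum>j\<in>nbrs i. F i j) \<noteq> 0}"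
proof (rule finite_subset[OF _ finite_imageI[OF assms, of fst]])
  show "{i. (\<Sum>j\<in>nbrs i. F i j) \<noteq> 0} \<subseteq> fst ` {(i, j). j \<in> nbrs i \<and> F i j \<noteq> 0}"
    by (force elim: sum.not_neutral_contains_not_neutral)
qed

lemma Sum_any_nbrs_swap:
  assumes "finite {(i, j). j \<in> nbrs i \<and> F i j \<noteq> 0}" (is "finite ?S")
  shows "Sum_any (\<lambda>i. \<Sum>j\<in>nbrs i. F i j) = Sum_any (\<lambda>j. \<Sum>i\<in>nbrs j. F i j)"
proof -
  let ?g = "\<lambda>i j. if j \<in> nbrs i then F i j else 0"
  have "{i. \<exists>j. ?g i j \<noteq> 0} \<times> {j. \<exists>i. ?g i j \<noteq> 0} \<subseteq> fst ` ?S \<times> snd ` ?S"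
    by (auto simp: image_iff split: if_splits) force+
  then have "Sum_any (\<lambda>i. Sum_any (?g i)) = Sum_any (\<lambda>j. Sum_any (\<lambda>i. ?g i j))"
    using assms by (intro Sum_any.swap) auto
  then show ?thesis by (simp add: Sum_any_nbrs nbrs_sym[of _ "_ :: site"])
qed

lemma sum_bonds_eq_Sum_any_nbrs:
  assumes "finite P" "P \<subseteq> {(i, j). j \<in> nbrs i}"
    and "\<And>i j. j \<in> nbrs i \<Longrightarrow> F i j \<noteq> 0 \<Longrightarrow> (i, j) \<in> P"
  shows "(\<Sum>(i, j)\<in>P. F i j) = Sum_any (\<lambda>i. \<Sum>j\<in>nbrs i. F i j)"
proof -
  let ?g = "\<lambda>i j. if j \<in> nbrs i then F i j else 0"
  have "(\<Sum>(i, j)\<in>P. F i j) = (\<Sum>(i, j)\<in>P. ?g i j)"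
    using assms(2) by (intro sum.cong) auto
  also have "\<dots> = Sum_any (\<lambda>(i, j). ?g i j)"
    using assms by (intro Sum_any.expand_superset[symmetric]) (auto split: if_splits)
  also have "\<dots> = Sum_any (\<lambda>i. Sum_any (?g i))"
    using assms by (intro Sum_any.cartesian_product[symmetric, of "fst ` P \<times> snd ` P"])
      (auto split: if_splits, force+)
  finally show ?thesis by (simp add: Sum_any_nbrs)
qed

lemma Sum_any_nbrs_from_midpoints:
  fixes D :: "site \<Rightarrow> site \<Rightarrow> real"
  assumes fin: "finite {(i, j). j \<in> nbrs i \<and> D i j \<noteq> 0}" and sym: "\<And>i j. D i j = D j i"
  shows "Sum_any (\<lambda>i. \<Sum>j\<in>nbrs i. D i j)
    = 2 * Sum_any (\<lambda>i. if midpoint i then \<Sum>j\<in>nbrs i. D i j else 0)"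
proof -
  define A where "A i j = (if midpoint i then D i j else 0)" for i j
  define B where "B i j = (if midpoint i then 0 else D i j)" for i j
  have finA: "finite {(i, j). j \<in> nbrs i \<and> A i j \<noteq> 0}"
    and finB: "finite {(i, j). j \<in> nbrs i \<and> B i j \<noteq> 0}"
    by (auto simp: A_def B_def intro: rev_finite_subset[OF fin])
  have A_sum: "(\<Sum>j\<in>nbrs i. A i j) = (if midpoint i then \<Sum>j\<in>nbrs i. D i j else 0)" for i
    by (simp add: A_def)
  have "(\<Sum>j\<in>nbrs i. A i j) + (\<Sum>j\<in>nbrs i. B i j) = (\<Sum>j\<in>nbrs i. D i j)" for i
    by (cases "midpoint i") (simp_all add: A_def B_def)
  then have "Sum_any (\<lambda>i. \<Sum>j\<in>nbrs i. D i j)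
      = Sum_any (\<lambda>i. (\<Sum>j\<in>nbrs i. A i j) + (\<Sum>j\<in>nbrs i. B i j))"
    by simp
  also have "\<dots> = Sum_any (\<lambda>i. \<Sum>j\<in>nbrs i. A i j) + Sum_any (\<lambda>j. \<Sum>i\<in>nbrs j. B i j)"
    using finA finB by (simp add: Sum_any.distrib finite_support_sum_nbrs Sum_any_nbrs_swap)
  also have "(\<lambda>j. \<Sum>i\<in>nbrs j. B i j) = (\<lambda>j. \<Sum>i\<in>nbrs j. A j i)"
    by (intro ext sum.cong) (auto simp: A_def B_def sym nbrs_midpoint_iff)
  finally show ?thesis by (simp only: A_sum mult_2)
qed

lemma sum_bonds_touching:
  fixes D :: "site \<Rightarrow> site \<Rightarrow> real"
  assumes fin: "finite \<Lambda>" and near: "\<And>i j. j \<in> nbrs i \<Longrightarrow> D i j \<noteq> 0 \<Longrightarrow> i \<in> \<Lambda> \<or> j \<in> \<Lambda>"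
    and sym: "\<And>i j. D i j = D j i"
  shows "(\<Sum>(i, j)\<in>{(i, j). j \<in> nbrs i \<and> (i \<in> \<Lambda> \<or> j \<in> \<Lambda>)}. D i j)
    = 2 * Sum_any (\<lambda>i. if midpoint i then \<Sum>j\<in>nbrs i. D i j else 0)"
proof -
  let ?P = "{(i, j). j \<in> nbrs i \<and> (i \<in> \<Lambda> \<or> j \<in> \<Lambda>)}"
  have finP: "finite ?P" using fin by (rule finite_bonds_touching)
  have finD: "finite {(i, j). j \<in> nbrs i \<and> D i j \<noteq> 0}"
    using near by (intro rev_finite_subset[OF finP]) auto
  have "(\<Sum>(i, j)\<in>?P. D i j) = Sum_any (\<lambda>i. \<Sum>j\<in>nbrs i. D i j)"
    using near by (intro sum_bonds_eq_Sum_any_nbrs finP) auto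
  also have "\<dots> = 2 * Sum_any (\<lambda>i. if midpoint i then \<Sum>j\<in>nbrs i. D i j else 0)"
    by (rule Sum_any_nbrs_from_midpoints[OF finD sym])
  finally show ?thesis .
qed

section \<open>Midpoint energies\<close>

lemma cos_commute: "cos (x - y) = cos (y - x)"
  by (metis cos_minus minus_diff_eq)

definition midpoint_energy :: "real \<Rightarrow> (site \<Rightarrow> real) \<Rightarrow> site \<Rightarrow> real" where
  "midpoint_energy J \<theta> m = - (\<Sum>j\<in>nbrs m. J * cos (\<theta> m - \<theta> j)) - field m * sin (\<theta> m)"

lemma midpoint_energy_cong:
  "(\<And>j. j \<in> insert m (nbrs m) \<Longrightarrow> \<theta> j = \<theta>0 j) \<Longrightarrow> midpoint_energy J \<theta> m = midpoint_energy J \<theta>0 m"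
  by (simp add: midpoint_energy_def)

lemma H_loc_diff:
  assumes fin: "finite \<Lambda>" and agree: "\<forall>i\<in>dlat - \<Lambda>. \<theta> i = \<theta>0 i"
  shows "H_loc J \<Lambda> \<theta> - H_loc J \<Lambda> \<theta>0
    = Sum_any (\<lambda>m. if midpoint m then midpoint_energy J \<theta> m - midpoint_energy J \<theta>0 m else 0)"
proof -
  define D where "D i j = J * cos (\<theta> i - \<theta> j) - J * cos (\<theta>0 i - \<theta>0 j)" for i j
  define \<Phi> where "\<Phi> i = field i * sin (\<theta> i) - field i * sin (\<theta>0 i)" for i
  define B where "B i = (if midpoint i then \<Sum>j\<in>nbrs i. D i j else 0)" for i
  define F where "F i = (if midpoint i then \<Phi> i else 0)" for i
  have same: "\<theta> i = \<theta>0 i" if "i \<in> dlat" "i \<notin> \<Lambda>" for i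
    using agree that by blast
  have D_local: "i \<in> \<Lambda> \<or> j \<in> \<Lambda>" if "j \<in> nbrs i" "D i j \<noteq> 0" for i j
  proof (rule ccontr)
    assume "\<not> (i \<in> \<Lambda> \<or> j \<in> \<Lambda>)"
    then have "\<theta> i = \<theta>0 i" "\<theta> j = \<theta>0 j" using that(1) same by (auto simp: nbrs_def)
    then show False using that(2) by (simp add: D_def)
  qed
  have D_sym: "D i j = D j i" for i j
    unfolding D_def by (metis cos_commute)
  have \<Phi>_midpoint: "midpoint i" if "\<Phi> i \<noteq> 0" for i
    using that by (auto simp: \<Phi>_def field_eq dest: charged_midpoint split: if_splits)
  have \<Phi>_local: "i \<in> \<Lambda>" if "\<Phi> i \<noteq> 0" for i
    using that same[OF midpoint_in_dlat[OF \<Phi>_midpoint[OF that]]] by (force simp: \<Phi>_def)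
  have "H_loc J \<Lambda> \<theta> - H_loc J \<Lambda> \<theta>0
      = - (1/2) * (\<Sum>(i, j)\<in>{(i, j). j \<in> nbrs i \<and> (i \<in> \<Lambda> \<or> j \<in> \<Lambda>)}. D i j) - (\<Sum>i\<in>\<Lambda>. \<Phi> i)"
    by (simp add: H_loc_def nbrs_def D_def \<Phi>_def split_def sum_subtractf algebra_simps)
  also have "(\<Sum>(i, j)\<in>{(i, j). j \<in> nbrs i \<and> (i \<in> \<Lambda> \<or> j \<in> \<Lambda>)}. D i j) = 2 * Sum_any B"
    unfolding B_def using fin D_local D_sym by (rule sum_bonds_touching)
  also have "(\<Sum>i\<in>\<Lambda>. \<Phi> i) = (\<Sum>i\<in>\<Lambda>. F i)"
    using \<Phi>_midpoint by (intro sum.cong) (auto simp: F_def)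
  also have "\<dots> = Sum_any F"
    using \<Phi>_local
    by (intro Sum_any.expand_superset[symmetric] fin) (auto simp: F_def split: if_splits)
  also have "- (1/2) * (2 * Sum_any B) - Sum_any F = Sum_any (\<lambda>i. - (B i + F i))"
  proof -
    have "finite {i. B i \<noteq> 0}"
      using D_local by (intro finite_support_near[OF fin])
        (force simp: B_def split: if_splits elim: sum.not_neutral_contains_not_neutral)
    moreover have "finite {i. F i \<noteq> 0}"
      using \<Phi>_local by (intro finite_support_near[OF fin]) (auto simp: F_def split: if_splits)
    ultimately have "Sum_any (\<lambda>i. B i + F i) = Sum_any B + Sum_any F" by (rule Sum_any.distrib)
    then show ?thesis unfolding Sum_any_uminus by simp
  qed
  also have "\<dots>
      = Sum_any (\<lambda>m. if midpoint m then midpoint_energy J \<theta> m - midpoint_energy J \<theta>0 m else 0)"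
    by (intro Sum_any.cong) (simp add: midpoint_energy_def B_def F_def D_def \<Phi>_def sum_subtractf)
  finally show ?thesis .
qed

definition compensation :: "(site \<Rightarrow> real) \<Rightarrow> site \<Rightarrow> real" where
  "compensation g m = field m * (\<Sum>u\<in>nbrs m. if full u then 0 else g u)"

lemma compensation_diff:
  "compensation f m - compensation g m = compensation (\<lambda>u. f u - g u) m"
  by (simp add: compensation_def right_diff_distrib[symmetric] sum_subtractf[symmetric]
      if_distrib[of "\<lambda>x. x - _"] cong: if_cong)

lemma Sum_any_compensation_eq_0:
  assumes fin: "finite {u. u \<in> dlat \<and> g u \<noteq> 0}" (is "finite ?S")
  shows "Sum_any (compensation g) = 0"
proof -
  define F where "F m u = field m * (if full u then 0 else g u)" for m u
  have "{(m, u). u \<in> nbrs m \<and> F m u \<noteq> 0} \<subseteq> prod.swap ` Sigma ?S nbrs"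
    by (auto simp: F_def image_iff nbrs_sym[of _ "_ :: site"] split: if_splits)
      (auto simp: nbrs_def)
  moreover have "finite (Sigma ?S nbrs)" by (intro finite_SigmaI fin finite_nbrs)
  ultimately have finF: "finite {(m, u). u \<in> nbrs m \<and> F m u \<noteq> 0}"
    by (meson finite_imageI finite_subset)
  have "Sum_any (compensation g) = Sum_any (\<lambda>m. \<Sum>u\<in>nbrs m. F m u)"
    by (simp add: compensation_def F_def sum_distrib_left)
  also have "\<dots> = Sum_any (\<lambda>u. \<Sum>m\<in>nbrs u. F m u)"
    by (rule Sum_any_nbrs_swap[OF finF])
  also have "\<dots> = Sum_any (\<lambda>u. (if full u then 0 else g u) * (\<Sum>m\<in>nbrs u. field m))"
    by (intro Sum_any.cong) (simp add: F_def sum_distrib_left mult.commute)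
  also have "\<dots> = 0"
    using field_sum_nbrs_eq_0 by (simp add: if_distrib[of "\<lambda>x. x * _"] cong: if_cong)
  finally show ?thesis .
qed

definition compensated_energy :: "real \<Rightarrow> real \<Rightarrow> (site \<Rightarrow> real) \<Rightarrow> site \<Rightarrow> real" where
  "compensated_energy J c \<theta> m = midpoint_energy J \<theta> m + c * compensation (\<lambda>p. sin (\<theta> p)) m"

lemma Sum_any_compensated_energy:
  assumes fin: "finite \<Lambda>" and agree: "\<forall>i\<in>dlat - \<Lambda>. \<theta> i = \<theta>0 i"
  shows "Sum_any (\<lambda>m. if midpoint m then midpoint_energy J \<theta> m - midpoint_energy J \<theta>0 m else 0)
    = Sum_any (\<lambda>m. if midpoint m
        then compensated_energy J c \<theta> m - compensated_energy J c \<theta>0 m else 0)"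
proof -
  define g where "g = (\<lambda>u. sin (\<theta> u) - sin (\<theta>0 u))"
  define E where
    "E m = (if midpoint m then midpoint_energy J \<theta> m - midpoint_energy J \<theta>0 m else 0)" for m
  have g_local: "u \<in> \<Lambda>" if "u \<in> dlat" "g u \<noteq> 0" for u
    using that agree unfolding g_def by (metis DiffI diff_self)
  have finE: "finite {m. E m \<noteq> 0}"
  proof (rule finite_support_near[OF fin])
    fix m assume "E m \<noteq> 0"
    then have "midpoint m" "midpoint_energy J \<theta> m \<noteq> midpoint_energy J \<theta>0 m"
      by (auto simp: E_def split: if_splits)
    moreover have "\<theta> j = \<theta>0 j" if "j \<in> insert m (nbrs m)" "j \<notin> \<Lambda>" for j
      using that agree midpoint_in_dlat[OF \<open>midpoint m\<close>] by (auto simp: nbrs_def)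
    ultimately show "m \<in> \<Lambda> \<or> (\<exists>j\<in>nbrs m. j \<in> \<Lambda>)"
      using midpoint_energy_cong[of m \<theta> \<theta>0 J] by blast
  qed
  have finC: "finite {m. compensation g m \<noteq> 0}"
  proof (rule finite_support_near[OF fin])
    fix m assume "compensation g m \<noteq> 0"
    then show "m \<in> \<Lambda> \<or> (\<exists>j\<in>nbrs m. j \<in> \<Lambda>)"
      using g_local
      by (force simp: compensation_def nbrs_def split: if_splits
          elim: sum.not_neutral_contains_not_neutral)
  qed
  have "Sum_any (compensation g) = 0"
    using g_local by (intro Sum_any_compensation_eq_0 rev_finite_subset[OF fin]) auto
  then have "Sum_any E = Sum_any E + c * Sum_any (compensation g)" by simp
  also have "\<dots> = Sum_any (\<lambda>m. E m + c * compensation g m)"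
    using finE finC by (simp add: Sum_any_right_distrib Sum_any.distrib)
  also have "\<dots> = Sum_any (\<lambda>m. if midpoint m
        then compensated_energy J c \<theta> m - compensated_energy J c \<theta>0 m else 0)"
  proof (intro Sum_any.cong)
    fix m
    show "E m + c * compensation g m = (if midpoint m
        then compensated_energy J c \<theta> m - compensated_energy J c \<theta>0 m else 0)"
    proof (cases "midpoint m")
      case False
      then have "compensation g m = 0"
        by (auto simp: compensation_def field_eq dest: charged_midpoint)
      then show ?thesis using False by (simp add: E_def)
    qed (simp add: E_def g_def compensated_energy_def compensation_diff[symmetric] algebra_simps)
  qed
  finally show ?thesis by (simp add: E_def)
qed

section \<open>The tilted ground state\<close>

lemma charged_energy_ge:
  fixes J R \<beta> e x y z :: real
  assumes J: "J \<ge> 0" and R: "R > 0" "R * cos \<beta> = J" "R * sin \<beta> = 2" and e: "e = 1 \<or> e = -1"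
  shows "- J - R \<le> - J * cos (x - y) - J * cos (x - z) - 2 * e * sin x + 2 * e * (J / R) * sin z"
proof -
  have R2: "R^2 = J^2 + 4"
  proof -
    have "J^2 + 4 = (R * cos \<beta>)^2 + (R * sin \<beta>)^2" using R(2,3) by simp
    also have "\<dots> = R^2 * (sin \<beta> ^ 2 + cos \<beta> ^ 2)" by algebra
    finally show ?thesis by (simp only: sin_cos_squared_add mult_1_right)
  qed
  have sos: "2 * R * (R - J * cos (x - z) - 2 * sin x + 2 * (J / R) * sin z)
      = (R * cos x - J * cos z)^2 + (R * sin x - J * sin z - 2)^2" for x z
  proof -
    have "(R * cos x - J * cos z)^2 + (R * sin x - J * sin z - 2)^2
        = R^2 * (sin x ^ 2 + cos x ^ 2) + J^2 * (sin z ^ 2 + cos z ^ 2) + 4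
          - 2 * R * J * (cos x * cos z + sin x * sin z) - 4 * R * sin x + 4 * J * sin z"
      by algebra
    also have "\<dots> = 2 * R * (R - J * cos (x - z) - 2 * sin x + 2 * (J / R) * sin z)"
      using R R2 by (simp add: cos_diff field_simps power2_eq_square)
    finally show ?thesis ..
  qed
  have bound: "- R \<le> - J * cos (x - z) - 2 * sin x + 2 * (J / R) * sin z" for x z
  proof -
    have "0 \<le> 2 * R * (R - J * cos (x - z) - 2 * sin x + 2 * (J / R) * sin z)"
      unfolding sos by simp
    then show ?thesis using R(1) by (simp add: zero_le_mult_iff)
  qed
  have "- J \<le> - J * cos (x - y)" using J by (simp add: mult_left_le)
  moreover have "- R \<le> - J * cos (x - z) - 2 * e * sin x + 2 * e * (J / R) * sin z"
  proof (cases "e = 1")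
    case False
    have "cos (- x - - z) = cos (x - z)" using cos_commute[of z x] by simp
    then show ?thesis using False e bound[of "- x" "- z"] by simp
  qed (use bound[of x z] in simp)
  ultimately show ?thesis by linarith
qed

(* The mostly East state is beta * tilt: East where tilt is 0, NE or SE where it is 1 or -1. *)
definition tilt :: "site \<Rightarrow> real" where
  "tilt p = (if full p \<or> charged p then block_sign p else 0)"

lemma compensated_energy_tilted_le:
  assumes J: "J > 0" and R: "R > 0" "R * cos \<beta> = J" "R * sin \<beta> = 2" and m: "midpoint m"
  shows "compensated_energy J (J / R) (\<lambda>p. \<beta> * tilt p) m \<le> compensated_energy J (J / R) \<theta> m"
proof (cases "charged m")
  case True
  then obtain c u
    where cu: "nbrs m = {c, u}" "full c" "center u" "\<not> full u" "block_sign c = block_sign m"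
    by (rule charged_nbrs)
  define e where "e = block_sign m"
  have e: "e = 1 \<or> e = -1" by (simp add: e_def block_sign_def)
  have "c \<noteq> u" using cu by auto
  then have val: "compensated_energy J (J / R) \<phi> m
      = - J * cos (\<phi> m - \<phi> c) - J * cos (\<phi> m - \<phi> u) - 2 * e * sin (\<phi> m)
        + 2 * e * (J / R) * sin (\<phi> u)" for \<phi>
    using True cu
    by (simp add: compensated_energy_def midpoint_energy_def compensation_def field_eq e_def
        algebra_simps)
  have tilt: "tilt m = e" "tilt c = e" "tilt u = 0"
    using True cu center_not_charged[of u] by (auto simp: tilt_def e_def)
  have "J * cos \<beta> + 2 * sin \<beta> = (R * cos \<beta>) * cos \<beta> + (R * sin \<beta>) * sin \<beta>"
    using R by simp
  also have "\<dots> = R * (sin \<beta> ^ 2 + cos \<beta> ^ 2)" by algebra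
  finally have "J * cos \<beta> + 2 * sin \<beta> = R" by simp
  then have "J * cos (\<beta> * e) + 2 * e * sin (\<beta> * e) = R" using e by auto
  then have "compensated_energy J (J / R) (\<lambda>p. \<beta> * tilt p) m = - J - R"
    unfolding val tilt by simp
  also have "\<dots> \<le> compensated_energy J (J / R) \<theta> m"
    unfolding val by (rule charged_energy_ge[OF _ R e]) (use J in simp)
  finally show ?thesis .
next
  case False
  have tilt: "tilt j = 0" if "j \<in> nbrs m" for j
    using that charged_of_full_nbr[OF that] False
      center_not_charged[OF nbrs_of_midpoint_center[OF that m]]
    by (auto simp: tilt_def)
  have "\<not> full m" using m full_center center_not_midpoint by blast
  then have "tilt m = 0" using False by (simp add: tilt_def)
  then have "midpoint_energy J (\<lambda>p. \<beta> * tilt p) m = - (\<Sum>j\<in>nbrs m. J)"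
    using False by (simp add: midpoint_energy_def field_eq tilt)
  also have "\<dots> \<le> midpoint_energy J \<theta> m"
  proof -
    have "(\<Sum>j\<in>nbrs m. J * cos (\<theta> m - \<theta> j)) \<le> (\<Sum>j\<in>nbrs m. J)"
      using J by (intro sum_mono) (simp add: mult_left_le)
    then show ?thesis using False by (simp add: midpoint_energy_def field_eq)
  qed
  finally show ?thesis
    using False by (simp add: compensated_energy_def compensation_def field_eq)
qed

lemma ground_state_tilted:
  assumes J: "J > 0" and R: "R > 0" "R * cos \<beta> = J" "R * sin \<beta> = 2"
  shows "ground_state J (\<lambda>p. \<beta> * tilt p)"
  unfolding ground_state_def
proof (intro allI impI)
  fix \<Lambda> \<theta> assume fin: "finite \<Lambda>" and agree: "\<forall>i\<in>dlat - \<Lambda>. \<theta> i = \<beta> * tilt i"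
  let ?s = "\<lambda>p. \<beta> * tilt p"
  have "H_loc J \<Lambda> \<theta> - H_loc J \<Lambda> ?s = Sum_any (\<lambda>m. if midpoint m
      then compensated_energy J (J / R) \<theta> m - compensated_energy J (J / R) ?s m else 0)"
    using H_loc_diff[OF fin agree] Sum_any_compensated_energy[OF fin agree] by simp
  also have "\<dots> \<ge> 0"
    using compensated_energy_tilted_le[OF J R] by (intro Sum_any_nonneg) simp
  finally show "H_loc J \<Lambda> ?s \<le> H_loc J \<Lambda> \<theta>" by simp
qed

lemma H_loc_reflect: "H_loc J \<Lambda> (\<lambda>p. pi - \<theta> p) = H_loc J \<Lambda> \<theta>"
proof -
  have "cos ((pi - a) - (pi - b)) = cos (a - b)" for a b :: real
    using cos_commute[of a b] by simp
  then show ?thesis by (simp add: H_loc_def)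
qed

lemma ground_state_reflect:
  assumes "ground_state J \<theta>"
  shows "ground_state J (\<lambda>p. pi - \<theta> p)"
  unfolding ground_state_def
proof (intro allI impI)
  fix \<Lambda> \<theta>'
  assume "finite \<Lambda>" "\<Lambda> \<subseteq> dlat" "\<forall>i\<in>dlat - \<Lambda>. \<theta>' i = pi - \<theta> i"
  then have "H_loc J \<Lambda> \<theta> \<le> H_loc J \<Lambda> (\<lambda>p. pi - \<theta>' p)"
    using assms unfolding ground_state_def by simp
  then show "H_loc J \<Lambda> (\<lambda>p. pi - \<theta> p) \<le> H_loc J \<Lambda> \<theta>'"
    by (simp add: H_loc_reflect)
qed

theorem lemma1:
  fixes J :: real
  assumes "J > 0"
  shows "\<exists>\<theta>ME \<theta>MW. ground_state J \<theta>ME \<and> ground_state J \<theta>MW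
            \<and> (\<exists>i\<in>dlat. (cos (\<theta>ME i), sin (\<theta>ME i)) \<noteq> (cos (\<theta>MW i), sin (\<theta>MW i)))
            \<and> (\<forall>i\<in>dlat. cos (\<theta>ME i) = - cos (\<theta>MW i) \<and> cos (\<theta>ME i) \<noteq> 0)"
proof -
  define R where "R = sqrt (J^2 + 4)"
  have R: "R > 0" "R^2 = J^2 + 4" by (simp_all add: R_def add_nonneg_pos)
  have "(J / R)^2 + (2 / R)^2 = (J^2 + 4) / R^2" by (simp add: power_divide add_divide_distrib)
  also have "\<dots> = 1" using R(1) by (simp add: R(2)[symmetric])
  finally obtain \<beta> where \<beta>: "J / R = cos \<beta>" "2 / R = sin \<beta>" by (rule sincos_total_2pi)
  then have gs: "ground_state J (\<lambda>p. \<beta> * tilt p)"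
    using R assms by (intro ground_state_tilted) (auto simp: field_simps)
  have "cos \<beta> > 0" unfolding \<beta>(1)[symmetric] using R(1) assms by simp
  then have cos_ne: "cos (\<beta> * tilt i) \<noteq> 0" for i by (simp add: tilt_def block_sign_def)
  have "(1, 1) \<in> dlat" by (simp add: dlat_def)
  then show ?thesis
    using gs ground_state_reflect[OF gs] cos_ne
    by (intro exI[of _ "\<lambda>p. \<beta> * tilt p"] exI[of _ "\<lambda>p. pi - \<beta> * tilt p"]) auto
qed

end
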